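(* Let $n\ge 2$, $R>1$, $a=6R$, and let $u'':[1,a]\to[0,\infty)$ satisfy $u''<R$. Let $f_t(x)$, $x\in[1,a]$, evolve by $$\dot f=u''(x)\left(\frac{f''}{1+f'^2}+(n-1)\frac{xf'-f}{x^2+f^2}\right)$$ with fixed boundary values. Then for $y_0$ sufficiently negative the following holds: if the graph of $f_0$ does not intersect the ball $B_R(3R,y_0)$, then the family of shrinking balls $B_{\sqrt{R^2-4Rt}}(3R,y_0)$ does not intersect the graphs of $f_t$, as long as the flow is defined (and $t<R/4$).
   Context: Here $u''$ is the second $\rho$-derivative of the potential $u(\rho)$ of a Calabi-symmetric K\"ahler form $\omega=i\partial\bar\partial u$ on the blowup of $\mathbb{P}^n$ at a point in the class $a[H]-[E]$, regarded as a function of the Legendre coordinate $x=u'(\rho)\in[1,a]$. *)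

theory Defs
  imports "HOL-Analysis.Analysis"
begin

definition flow_solution ::
  "nat \<Rightarrow> real \<Rightarrow> (real \<Rightarrow> real) \<Rightarrow> real \<Rightarrow> (real \<Rightarrow> real \<Rightarrow> real) \<Rightarrow> bool" where
  "flow_solution n a u2 T f \<longleftrightarrow>
     continuous_on ({0..<T} \<times> {1..a}) (\<lambda>(t, x). f t x) \<and>
     (\<forall>t\<in>{0..<T}. f t 1 = f 0 1 \<and> f t a = f 0 a) \<and>
     (\<exists>f1 f2 ft :: real \<Rightarrow> real \<Rightarrow> real.
        continuous_on ({0<..<T} \<times> {1<..<a}) (\<lambda>(t, x). f1 t x) \<and>
        continuous_on ({0<..<T} \<times> {1<..<a}) (\<lambda>(t, x). f2 t x) \<and>
        continuous_on ({0<..<T} \<times> {1<..<a}) (\<lambda>(t, x). ft t x) \<and>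
        (\<forall>t\<in>{0<..<T}. \<forall>x\<in>{1<..<a}.
           ((\<lambda>y. f t y) has_real_derivative f1 t x) (at x) \<and>
           ((\<lambda>y. f1 t y) has_real_derivative f2 t x) (at x) \<and>
           ((\<lambda>s. f s x) has_real_derivative ft t x) (at t) \<and>
           ft t x = u2 x * (f2 t x / (1 + (f1 t x)\<^sup>2)
                     + real (n - 1) * (x * f1 t x - f t x) / (x\<^sup>2 + (f t x)\<^sup>2))))"

end

theory Submission
  imports Defs
begin

(*
  For rho <= R^2 consider G(t, x) = |(x, f t x) - (3R, y0)|^2 + 4Rt - rho, which is positive
  at t = 0 if the initial graph stays outside the disc of radius sqrt rho. At the first time
  G vanishes, at some x, the graph touches the disc from outside; the contact point lies within
  R of the centre, hence in the interior of [1, 6R], so there G_x = 0 (tangency), G_xx >= 0 and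
  G_t <= 0. With w = f - y0, convexity gives w f''/(1 + f'^2) >= -1, and tangency together
  with |f| >= 2(n - 1)R (from y0 <= -2nR) gives (n - 1) w (x f' - f)/(x^2 + f^2) >= -1.
  Hence w f_t >= -2u'' > -2R and G_t = 2 w f_t + 4R > 0, a contradiction.
  Letting rho increase to R^2 gives the statement.
*)

lemma DERIV_left_min_nonpos:
  fixes \<phi> :: "real \<Rightarrow> real"
  assumes "(\<phi> has_real_derivative D) (at t)"
    and "\<And>s. s \<in> {a<..<t} \<Longrightarrow> \<phi> t \<le> \<phi> s" and "a < t"
  shows "D \<le> 0"
proof (rule ccontr)
  assume "\<not> D \<le> 0"
  then obtain d where "d > 0" and d: "\<And>h. 0 < h \<Longrightarrow> h < d \<Longrightarrow> \<phi> (t - h) < \<phi> t"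
    using DERIV_pos_inc_left[OF assms(1)] by force
  define h where "h = min d (t - a) / 2"
  have "0 < h" "h < d" "t - h \<in> {a<..<t}"
    using \<open>d > 0\<close> \<open>a < t\<close> by (auto simp: h_def min_def field_simps)
  then show False
    using d assms(2) by fastforce
qed

lemma DERIV_local_min_second_order:
  fixes g g' :: "real \<Rightarrow> real"
  assumes "a < x" "x < b"
    and g: "\<And>y. y \<in> {a<..<b} \<Longrightarrow> (g has_real_derivative g' y) (at y)"
    and g': "(g' has_real_derivative g'') (at x)"
    and min: "\<And>y. y \<in> {a<..<b} \<Longrightarrow> g x \<le> g y"
  shows "g' x = 0" and "0 \<le> g''"
proof -
  show "g' x = 0"
  proof (rule DERIV_local_min[OF g])
    show "0 < min (x - a) (b - x)" using assms(1,2) by simp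
    show "\<forall>y. \<bar>x - y\<bar> < min (x - a) (b - x) \<longrightarrow> g x \<le> g y"
      by (intro allI impI min) (auto simp: abs_less_iff)
  qed (use assms(1,2) in auto)
  show "0 \<le> g''"
  proof (rule ccontr)
    assume "\<not> 0 \<le> g''"
    then obtain d where "d > 0" and d: "\<And>h. 0 < h \<Longrightarrow> h < d \<Longrightarrow> g' (x + h) < g' x"
      using DERIV_neg_dec_right[OF g'] by force
    define c where "c = x + min d (b - x) / 2"
    have "x < c" "c < b" "c < x + d" using \<open>d > 0\<close> \<open>x < b\<close> by (auto simp: c_def min_def field_simps)
    have "g c < g x"
    proof (rule DERIV_neg_imp_decreasing_open[OF \<open>x < c\<close>])
      fix y assume "x < y" "y < c"
      then show "\<exists>l. (g has_real_derivative l) (at y) \<and> l < 0"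
        using g[of y] d[of "y - x"] \<open>g' x = 0\<close> \<open>x < c\<close> \<open>c < b\<close> \<open>c < x + d\<close> \<open>a < x\<close> by force
    next
      show "continuous_on {x..c} g"
        using g \<open>a < x\<close> \<open>c < b\<close>
        by (intro continuous_at_imp_continuous_on ballI DERIV_isCont[OF g]) auto
    qed
    then show False
      using min[of c] \<open>x < c\<close> \<open>c < b\<close> \<open>a < x\<close> by auto
  qed
qed

lemma first_contact_time:
  fixes G :: "real \<Rightarrow> 'a::metric_space \<Rightarrow> real"
  assumes X: "compact X" and cont: "continuous_on ({a..b} \<times> X) (\<lambda>(s, y). G s y)"
    and pos: "\<And>y. y \<in> X \<Longrightarrow> 0 < G a y" and "a \<le> b" "x \<in> X" "G b x \<le> 0"
  obtains ts xs where "a < ts" "ts \<le> b" "xs \<in> X" "G ts xs = 0"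
    "\<And>s y. s \<in> {a..<ts} \<Longrightarrow> y \<in> X \<Longrightarrow> 0 < G s y"
    "\<And>y. y \<in> X \<Longrightarrow> 0 \<le> G ts y"
proof -
  define S where "S = ({a..b} \<times> X) \<inter> (\<lambda>(s, y). G s y) -` {..0}"
  have "compact ({a..b} \<times> X)"
    using X by (simp add: compact_Times)
  moreover have "closed S"
    unfolding S_def using cont \<open>compact ({a..b} \<times> X)\<close>
    by (intro continuous_closed_preimage) (auto intro: compact_imp_closed)
  ultimately have "compact S"
    using compact_Int_closed[of "{a..b} \<times> X" S] by (simp add: S_def Int_absorb1)
  moreover have "(b, x) \<in> S"
    using assms(4-6) by (auto simp: S_def)
  ultimately obtain ts xs where S: "(ts, xs) \<in> S" and ts_min: "\<And>p. p \<in> S \<Longrightarrow> ts \<le> fst p"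
    using continuous_attains_inf[of S fst] continuous_on_fst[OF continuous_on_id] by fastforce
  then have "a \<le> ts" "ts \<le> b" "xs \<in> X" "G ts xs \<le> 0"
    by (auto simp: S_def)
  with pos[of xs] have "a < ts"
    by (cases "a = ts") auto
  have before: "0 < G s y" if "s \<in> {a..<ts}" "y \<in> X" for s y
    using ts_min[of "(s, y)"] that \<open>ts \<le> b\<close> by (force simp: S_def)
  have at: "0 \<le> G ts y" if "y \<in> X" for y
  proof (rule continuous_ge_on_closure[where f = "\<lambda>s. G s y"])
    show "continuous_on (closure {a..<ts}) (\<lambda>s. G s y)"
      using \<open>a < ts\<close> \<open>ts \<le> b\<close> \<open>y \<in> X\<close>
      by (intro continuous_on_compose2[OF cont, of _ "\<lambda>s. (s, y)", simplified]
          continuous_intros) auto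
  qed (use \<open>a < ts\<close> that before in \<open>force intro: less_imp_le\<close>)+
  show thesis
    using that[OF \<open>a < ts\<close> \<open>ts \<le> b\<close> \<open>xs \<in> X\<close> _ before at] at[OF \<open>xs \<in> X\<close>] \<open>G ts xs \<le> 0\<close>
    by simp
qed

lemma rotation_term_lower_bound:
  fixes k R c x w p f :: real
  assumes "0 \<le> k" "1 \<le> x" "\<bar>x - c\<bar> \<le> R" "\<bar>w\<bar> \<le> R" "2 * k * R \<le> \<bar>f\<bar>"
    and tangent: "(x - c) + w * p = 0"
  shows "-1 \<le> w * (k * (x * p - f) / (x\<^sup>2 + f\<^sup>2))"
proof -
  have "- (w * (x * p - f)) = x * (x - c) + w * f"
    using tangent by algebra
  also have "\<dots> \<le> x * \<bar>x - c\<bar> + \<bar>w\<bar> * \<bar>f\<bar>"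
    using \<open>1 \<le> x\<close> abs_triangle_ineq[of "x * (x - c)" "w * f"] by (simp add: abs_mult)
  also have "\<dots> \<le> x * R + R * \<bar>f\<bar>"
    using assms(2-4) by (intro add_mono mult_left_mono mult_right_mono) auto
  finally have "k * (- (w * (x * p - f))) \<le> k * (R * (x + \<bar>f\<bar>))"
    using \<open>0 \<le> k\<close> by (intro mult_left_mono) (auto simp: algebra_simps)
  also have "\<dots> \<le> \<bar>f\<bar> / 2 * (x + \<bar>f\<bar>)"
    using assms(2,5) mult_right_mono[of "2 * k * R" "\<bar>f\<bar>" "x + \<bar>f\<bar>"] by simp
  also have "\<dots> \<le> x\<^sup>2 + f\<^sup>2"
  proof -
    have "x\<^sup>2 + f\<^sup>2 - \<bar>f\<bar> / 2 * (x + \<bar>f\<bar>) = (x - \<bar>f\<bar> / 4)\<^sup>2 + 7 / 16 * f\<^sup>2"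
      by (simp add: power2_eq_square field_simps)
    moreover have "0 \<le> (x - \<bar>f\<bar> / 4)\<^sup>2 + 7 / 16 * f\<^sup>2"
      by simp
    ultimately show ?thesis
      by linarith
  qed
  finally have "- (w * (k * (x * p - f))) \<le> x\<^sup>2 + f\<^sup>2"
    by (simp add: algebra_simps)
  moreover have "0 < x\<^sup>2 + f\<^sup>2"
    using \<open>1 \<le> x\<close> by (simp add: add_pos_nonneg)
  ultimately show ?thesis
    by (simp add: field_simps)
qed

lemma contact_speed_lower_bound:
  fixes u R k c x w p q f :: real
  assumes "0 \<le> u" "u < R" "0 \<le> k" "1 \<le> x" "\<bar>x - c\<bar> \<le> R" "\<bar>w\<bar> \<le> R" "2 * k * R \<le> \<bar>f\<bar>"
    and tangent: "(x - c) + w * p = 0" and convex: "0 \<le> 1 + p\<^sup>2 + w * q"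
  shows "-2 * R < w * (u * (q / (1 + p\<^sup>2) + k * (x * p - f) / (x\<^sup>2 + f\<^sup>2)))"
proof -
  have "-1 \<le> w * (q / (1 + p\<^sup>2))"
    using convex by (simp add: field_simps add_pos_nonneg)
  with rotation_term_lower_bound[OF assms(3-7) tangent]
  have "u * -2 \<le> u * (w * (q / (1 + p\<^sup>2)) + w * (k * (x * p - f) / (x\<^sup>2 + f\<^sup>2)))"
    using \<open>0 \<le> u\<close> by (intro mult_left_mono) auto
  then show ?thesis
    using assms(1,2) by (simp add: algebra_simps)
qed

lemma flow_solutionE:
  assumes "flow_solution n a u2 T f"
  obtains f1 f2 ft where "continuous_on ({0..<T} \<times> {1..a}) (\<lambda>(t, x). f t x)"
    and "\<And>t x. t \<in> {0<..<T} \<Longrightarrow> x \<in> {1<..<a} \<Longrightarrow>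
           (f t has_real_derivative f1 t x) (at x) \<and>
           (f1 t has_real_derivative f2 t x) (at x) \<and>
           ((\<lambda>s. f s x) has_real_derivative ft t x) (at t) \<and>
           ft t x = u2 x * (f2 t x / (1 + (f1 t x)\<^sup>2)
                     + real (n - 1) * (x * f1 t x - f t x) / (x\<^sup>2 + (f t x)\<^sup>2))"
proof -
  from assms obtain f1 f2 ft where "continuous_on ({0..<T} \<times> {1..a}) (\<lambda>(t, x). f t x)"
    and "\<forall>t\<in>{0<..<T}. \<forall>x\<in>{1<..<a}.
           (f t has_real_derivative f1 t x) (at x) \<and>
           (f1 t has_real_derivative f2 t x) (at x) \<and>
           ((\<lambda>s. f s x) has_real_derivative ft t x) (at t) \<and>
           ft t x = u2 x * (f2 t x / (1 + (f1 t x)\<^sup>2)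
                     + real (n - 1) * (x * f1 t x - f t x) / (x\<^sup>2 + (f t x)\<^sup>2))"
    unfolding flow_solution_def by blast
  then show thesis
    by (intro that[of f1 f2 ft]) blast+
qed

lemma abs_le_if_sum_squares_le:
  fixes a b R :: real
  assumes "a\<^sup>2 + b\<^sup>2 \<le> R\<^sup>2" "0 \<le> R"
  shows "\<bar>a\<bar> \<le> R" "\<bar>b\<bar> \<le> R"
proof -
  have "a\<^sup>2 \<le> R\<^sup>2" "b\<^sup>2 \<le> R\<^sup>2"
    using assms(1) zero_le_power2[of a] zero_le_power2[of b] by linarith+
  then show "\<bar>a\<bar> \<le> R" "\<bar>b\<bar> \<le> R"
    using assms(2) by (simp_all add: abs_le_square_iff[symmetric])
qed

lemma closest_point_speed_lower_bound:
  fixes n :: nat and R c y0 a b x0 h2 u :: real and h h1 :: "real \<Rightarrow> real"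
  assumes "n \<ge> 2" "y0 \<le> - 2 * real n * R" "0 \<le> u" "u < R"
    and "1 \<le> a" "a < x0" "x0 < b"
    and h: "\<And>y. y \<in> {a<..<b} \<Longrightarrow> (h has_real_derivative h1 y) (at y)"
    and h1: "(h1 has_real_derivative h2) (at x0)"
    and closest: "\<And>y. y \<in> {a<..<b} \<Longrightarrow> (x0 - c)\<^sup>2 + (h x0 - y0)\<^sup>2 \<le> (y - c)\<^sup>2 + (h y - y0)\<^sup>2"
    and inside: "(x0 - c)\<^sup>2 + (h x0 - y0)\<^sup>2 \<le> R\<^sup>2"
  shows "-2 * R < (h x0 - y0) * (u * (h2 / (1 + (h1 x0)\<^sup>2)
                    + real (n - 1) * (x0 * h1 x0 - h x0) / (x0\<^sup>2 + (h x0)\<^sup>2)))"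
proof -
  define w where "w = h x0 - y0"
  have near: "\<bar>x0 - c\<bar> \<le> R" "\<bar>w\<bar> \<le> R"
    using abs_le_if_sum_squares_le[OF inside] \<open>0 \<le> u\<close> \<open>u < R\<close> by (simp_all add: w_def)
  define g' where "g' y = 2 * (y - c) + 2 * (h y - y0) * h1 y" for y
  have dist_deriv: "((\<lambda>y. (y - c)\<^sup>2 + (h y - y0)\<^sup>2) has_real_derivative g' y) (at y)"
    if "y \<in> {a<..<b}" for y
    using h[OF that] unfolding g'_def by (auto intro!: derivative_eq_intros)
  have g'_deriv: "(g' has_real_derivative 2 + 2 * (h1 x0)\<^sup>2 + 2 * w * h2) (at x0)"
    using h[of x0] h1 \<open>a < x0\<close> \<open>x0 < b\<close> unfolding g'_def w_def
    by (auto intro!: derivative_eq_intros simp: algebra_simps power2_eq_square)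
  note DERIV_local_min_second_order[OF \<open>a < x0\<close> \<open>x0 < b\<close> dist_deriv g'_deriv closest]
  then have tangent: "(x0 - c) + w * h1 x0 = 0" and convex: "0 \<le> 1 + (h1 x0)\<^sup>2 + w * h2"
    by (simp_all add: g'_def w_def algebra_simps)
  have "h x0 \<le> - (2 * real n - 1) * R"
    using near(2) \<open>y0 \<le> - 2 * real n * R\<close> by (simp add: w_def abs_le_iff algebra_simps)
  then have "2 * real (n - 1) * R \<le> \<bar>h x0\<bar>"
    using \<open>n \<ge> 2\<close> \<open>0 \<le> u\<close> \<open>u < R\<close> by (simp add: of_nat_diff algebra_simps)
  from contact_speed_lower_bound[OF \<open>0 \<le> u\<close> \<open>u < R\<close> _ _ near this tangent convex]
  show ?thesis
    using \<open>1 \<le> a\<close> \<open>a < x0\<close> by (simp add: w_def)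
qed

lemma shrinking_disc_first_contact:
  fixes a b c y0 \<rho> k T t x :: real and f :: "real \<Rightarrow> real \<Rightarrow> real"
  assumes cont: "continuous_on ({0..<T} \<times> {a..b}) (\<lambda>(t, x). f t x)"
    and init: "\<And>x. x \<in> {a..b} \<Longrightarrow> \<rho> < (x - c)\<^sup>2 + (f 0 x - y0)\<^sup>2"
    and "t \<in> {0..<T}" "x \<in> {a..b}" "(x - c)\<^sup>2 + (f t x - y0)\<^sup>2 \<le> \<rho> - k * t"
  obtains ts xs where "0 < ts" "ts \<le> t" "xs \<in> {a..b}"
    "(xs - c)\<^sup>2 + (f ts xs - y0)\<^sup>2 = \<rho> - k * ts"
    "\<And>y. y \<in> {a..b} \<Longrightarrow> \<rho> - k * ts \<le> (y - c)\<^sup>2 + (f ts y - y0)\<^sup>2"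
    "\<And>s. s \<in> {0..<ts} \<Longrightarrow> \<rho> - k * s < (xs - c)\<^sup>2 + (f s xs - y0)\<^sup>2"
proof -
  define G where "G s y = (y - c)\<^sup>2 + (f s y - y0)\<^sup>2 - (\<rho> - k * s)" for s y
  have "{0..t} \<times> {a..b} \<subseteq> {0..<T} \<times> {a..b}"
    using \<open>t \<in> {0..<T}\<close> by auto
  then have "continuous_on ({0..t} \<times> {a..b}) (\<lambda>(s, y). f s y)"
    by (rule continuous_on_subset[OF cont])
  then have "continuous_on ({0..t} \<times> {a..b}) (\<lambda>(s, y). G s y)"
    unfolding G_def case_prod_beta by (intro continuous_intros)
  then obtain ts xs where "0 < ts" "ts \<le> t" "xs \<in> {a..b}" "G ts xs = 0"
    and "\<And>s y. s \<in> {0..<ts} \<Longrightarrow> y \<in> {a..b} \<Longrightarrow> 0 < G s y"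
    and "\<And>y. y \<in> {a..b} \<Longrightarrow> 0 \<le> G ts y"
    using first_contact_time[of "{a..b}" 0 t G x] init assms(3-5) by (auto simp: G_def)
  then show thesis
    by (intro that[of ts xs]) (auto simp: G_def)
qed

lemma flow_avoids_shrinking_disc:
  fixes n :: nat and R \<rho> y0 T t x :: real and u2 :: "real \<Rightarrow> real"
    and f :: "real \<Rightarrow> real \<Rightarrow> real"
  assumes "n \<ge> 2" "R > 1" "\<rho> \<le> R\<^sup>2" "y0 \<le> - 2 * real n * R"
    and u2: "\<forall>x\<in>{1..6*R}. 0 \<le> u2 x \<and> u2 x < R"
    and flow: "flow_solution n (6*R) u2 T f"
    and init: "\<And>x. x \<in> {1..6*R} \<Longrightarrow> \<rho> < (x - 3*R)\<^sup>2 + (f 0 x - y0)\<^sup>2"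
    and "t \<in> {0..<T}" "x \<in> {1..6*R}"
  shows "\<rho> - 4*R*t < (x - 3*R)\<^sup>2 + (f t x - y0)\<^sup>2"
proof (rule ccontr)
  obtain f1 f2 ft where cont: "continuous_on ({0..<T} \<times> {1..6*R}) (\<lambda>(t, x). f t x)"
    and pde: "\<And>t x. t \<in> {0<..<T} \<Longrightarrow> x \<in> {1<..<6*R} \<Longrightarrow>
           (f t has_real_derivative f1 t x) (at x) \<and>
           (f1 t has_real_derivative f2 t x) (at x) \<and>
           ((\<lambda>s. f s x) has_real_derivative ft t x) (at t) \<and>
           ft t x = u2 x * (f2 t x / (1 + (f1 t x)\<^sup>2)
                     + real (n - 1) * (x * f1 t x - f t x) / (x\<^sup>2 + (f t x)\<^sup>2))"
    using flow_solutionE[OF flow] by blast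
  assume "\<not> ?thesis"
  then obtain ts xs where "0 < ts" "ts \<le> t" "xs \<in> {1..6*R}"
    and contact: "(xs - 3*R)\<^sup>2 + (f ts xs - y0)\<^sup>2 = \<rho> - 4 * R * ts"
    and outside: "\<And>y. y \<in> {1..6*R} \<Longrightarrow> \<rho> - 4 * R * ts \<le> (y - 3*R)\<^sup>2 + (f ts y - y0)\<^sup>2"
    and before: "\<And>s. s \<in> {0..<ts} \<Longrightarrow> \<rho> - 4 * R * s < (xs - 3*R)\<^sup>2 + (f s xs - y0)\<^sup>2"
    using shrinking_disc_first_contact[OF cont init \<open>t \<in> {0..<T}\<close> \<open>x \<in> {1..6*R}\<close>, of "4 * R"]
    by (auto simp: mult.assoc)
  have "0 < R * ts"
    using \<open>0 < ts\<close> \<open>R > 1\<close> by simp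
  then have inside: "(xs - 3*R)\<^sup>2 + (f ts xs - y0)\<^sup>2 \<le> R\<^sup>2"
    using contact \<open>\<rho> \<le> R\<^sup>2\<close> by simp
  then have xs: "1 < xs" "xs < 6*R" and ts: "ts \<in> {0<..<T}"
    using abs_le_if_sum_squares_le(1)[OF inside] \<open>R > 1\<close> \<open>0 < ts\<close> \<open>ts \<le> t\<close> \<open>t \<in> {0..<T}\<close>
    by auto
  note pde_xs = pde[OF ts, of xs]
  have "((\<lambda>s. (f s xs - y0)\<^sup>2 + 4 * R * s) has_real_derivative
      2 * (f ts xs - y0) * ft ts xs + 4 * R) (at ts)"
    using pde_xs xs by (auto intro!: derivative_eq_intros)
  moreover have "(f ts xs - y0)\<^sup>2 + 4 * R * ts \<le> (f s xs - y0)\<^sup>2 + 4 * R * s"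
    if "s \<in> {0<..<ts}" for s
    using before[of s] contact that by simp
  ultimately have "2 * (f ts xs - y0) * ft ts xs + 4 * R \<le> 0"
    using \<open>0 < ts\<close> by (rule DERIV_left_min_nonpos)
  moreover have "-2 * R < (f ts xs - y0) * ft ts xs"
  proof -
    have closest: "(xs - 3*R)\<^sup>2 + (f ts xs - y0)\<^sup>2 \<le> (y - 3*R)\<^sup>2 + (f ts y - y0)\<^sup>2"
      if "y \<in> {1<..<6*R}" for y
      using outside[of y] that contact by simp
    have h_deriv: "(f ts has_real_derivative f1 ts y) (at y)" if "y \<in> {1<..<6*R}" for y
      using pde[OF ts that] by blast
    have h1_deriv: "(f1 ts has_real_derivative f2 ts xs) (at xs)"
      and speed: "ft ts xs = u2 xs * (f2 ts xs / (1 + (f1 ts xs)\<^sup>2)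
                     + real (n - 1) * (xs * f1 ts xs - f ts xs) / (xs\<^sup>2 + (f ts xs)\<^sup>2))"
      using pde_xs xs by auto
    have "0 \<le> u2 xs" "u2 xs < R"
      using u2 xs by auto
    from closest_point_speed_lower_bound[OF \<open>n \<ge> 2\<close> \<open>y0 \<le> - 2 * real n * R\<close> this order_refl xs
        h_deriv h1_deriv closest inside]
    show ?thesis
      unfolding speed .
  qed
  ultimately show False
    by linarith
qed

lemma dist_Pair_Pair_sqrt:
  fixes a b x y :: real
  shows "dist (a, b) (x, y) = sqrt ((x - a)\<^sup>2 + (y - b)\<^sup>2)"
  by (simp add: dist_Pair_Pair dist_real_def power2_commute)

theorem proposition3p4:
  fixes n :: nat and R :: real and u2 :: "real \<Rightarrow> real"
  assumes "n \<ge> 2" and "R > 1"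
    and "continuous_on {1..6*R} u2"
    and "\<forall>x\<in>{1..6*R}. 0 \<le> u2 x \<and> u2 x < R"
  shows "\<exists>Y. \<forall>y0 \<le> Y. \<forall>(f :: real \<Rightarrow> real \<Rightarrow> real) T.
           flow_solution n (6*R) u2 T f \<longrightarrow>
           (\<forall>x\<in>{1..6*R}. (x, f 0 x) \<notin> ball (3*R, y0) R) \<longrightarrow>
           (\<forall>t\<in>{0..<T}. t < R / 4 \<longrightarrow>
              (\<forall>x\<in>{1..6*R}. (x, f t x) \<notin> ball (3*R, y0) (sqrt (R\<^sup>2 - 4*R*t))))"
proof (intro exI[of _ "- 2 * real n * R"] allI impI ballI)
  fix y0 T t x :: real and f :: "real \<Rightarrow> real \<Rightarrow> real"
  assume y0: "y0 \<le> - 2 * real n * R" and flow: "flow_solution n (6*R) u2 T f"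
    and outside: "\<forall>x\<in>{1..6*R}. (x, f 0 x) \<notin> ball (3*R, y0) R"
    and "t \<in> {0..<T}" "x \<in> {1..6*R}"
  have init: "R\<^sup>2 \<le> (y - 3*R)\<^sup>2 + (f 0 y - y0)\<^sup>2" if "y \<in> {1..6*R}" for y
    using bspec[OF outside that] \<open>R > 1\<close>
    by (intro sqrt_ge_absD) (simp add: dist_Pair_Pair_sqrt not_less)
  have "R\<^sup>2 - 4*R*t \<le> (x - 3*R)\<^sup>2 + (f t x - y0)\<^sup>2"
  proof (rule field_le_epsilon)
    fix e :: real assume "0 < e"
    have "R\<^sup>2 - e - 4*R*t < (x - 3*R)\<^sup>2 + (f t x - y0)\<^sup>2"
    proof (rule flow_avoids_shrinking_disc[OF assms(1,2) _ y0 assms(4) flow])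
      show "R\<^sup>2 - e < (y - 3*R)\<^sup>2 + (f 0 y - y0)\<^sup>2" if "y \<in> {1..6*R}" for y
        using init[OF that] \<open>0 < e\<close> by linarith
    qed (use \<open>0 < e\<close> \<open>t \<in> {0..<T}\<close> \<open>x \<in> {1..6*R}\<close> in auto)
    then show "R\<^sup>2 - 4*R*t \<le> (x - 3*R)\<^sup>2 + (f t x - y0)\<^sup>2 + e"
      by linarith
  qed
  then show "(x, f t x) \<notin> ball (3*R, y0) (sqrt (R\<^sup>2 - 4*R*t))"
    by (simp add: dist_Pair_Pair_sqrt)
qed

end
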